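(* Let $G$ be a group and $\mathcal{S}$ a 2-complex with vertices in $G$ such that $\mathcal{C}=Sc[\mathcal{S},G]$ is a commutative triplet structure. Then every edge of $\mathcal{C}$ has exactly two centers.
   Context: $\mathcal{S}(1)$ is the set of 2-sets contained in triangles of $\mathcal{S}$. For $\sigma\subseteq G$, $\sigma\cdot g=\{sg:s\in\sigma\}$; $Sc[\mathcal{S},G]=\{\sigma\cdot g:\sigma\in\mathcal{S},g\in G\}$. $\mathcal{T}=\mathcal{S}(1)$, $\mathcal{T}_o$ = ordered pairs $(t_1,t_2)$ with $\{t_1,t_2\}\in\mathcal{T}$. Commutative triplet structure: (0) $\{s,s^{-1}\}\notin\mathcal{T}$ for every vertex $s$; (A) every edge of $\mathcal{T}$ lies in exactly $\tilde d$ triangles of $\mathcal{S}$; (B) $ab=ba$ for $\{a,b\}\in\mathcal{T}$; (C) $\{a,b\}\in\mathcal{T}\iff\{a^{-1},b^{-1}\}\in\mathcal{T}$; (D) for $t\ne t'\in\mathcal{T}_o$, $t_1t_2^{-1}=t'_1(t'_2)^{-1}$ implies $t'_2=t_1^{-1}$, $t'_1=t_2^{-1}$; (E) the 1-skeleton of $\mathcal{S}$ is connected. For $\tau=\{a,b\}\in\mathcal{T}$ let $E(g,\tau)=\{ag,bg\}$. The edges of $\mathcal{C}$ are the sets $E(g,\tau)$; an element $c\in G$ is a center of an edge $w$ of $\mathcal{C}$ if $w=E(c,\tau)$ for some $\tau\in\mathcal{T}$. *)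

theory Defs
  imports "HOL-Algebra.Group"
begin

text \<open>A 2-complex with vertices in the group G is represented by its set S of
triangles (3-element subsets of the carrier of G).\<close>

definition two_complex_in :: "('a, 'b) monoid_scheme \<Rightarrow> 'a set set \<Rightarrow> bool" where
  "two_complex_in G S \<longleftrightarrow> (\<forall>\<sigma>\<in>S. \<sigma> \<subseteq> carrier G \<and> card \<sigma> = 3)"

definition cx_vertices :: "'a set set \<Rightarrow> 'a set" where
  "cx_vertices S = \<Union>S"

definition cx_edges :: "'a set set \<Rightarrow> 'a set set" where
  "cx_edges S = {e. card e = 2 \<and> (\<exists>\<sigma>\<in>S. e \<subseteq> \<sigma>)}"

definition rtrans :: "('a, 'b) monoid_scheme \<Rightarrow> 'a set \<Rightarrow> 'a \<Rightarrow> 'a set" where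
  "rtrans G \<sigma> g = (\<lambda>s. s \<otimes>\<^bsub>G\<^esub> g) ` \<sigma>"

definition Sc :: "('a, 'b) monoid_scheme \<Rightarrow> 'a set set \<Rightarrow> 'a set set" where
  "Sc G S = {rtrans G \<sigma> g | \<sigma> g. \<sigma> \<in> S \<and> g \<in> carrier G}"

definition ordered_edges :: "'a set set \<Rightarrow> ('a \<times> 'a) set" where
  "ordered_edges S = {(t1, t2). {t1, t2} \<in> cx_edges S}"

definition comm_triplet_structure :: "('a, 'b) monoid_scheme \<Rightarrow> 'a set set \<Rightarrow> bool" where
  "comm_triplet_structure G S \<longleftrightarrow>
     \<comment> \<open>(0)\<close>
     (\<forall>s\<in>cx_vertices S. {s, inv\<^bsub>G\<^esub> s} \<notin> cx_edges S) \<and>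
     \<comment> \<open>(A)\<close>
     (\<exists>d::nat. \<forall>e\<in>cx_edges S. finite {\<sigma>\<in>S. e \<subseteq> \<sigma>} \<and> card {\<sigma>\<in>S. e \<subseteq> \<sigma>} = d) \<and>
     \<comment> \<open>(B)\<close>
     (\<forall>a b. {a, b} \<in> cx_edges S \<longrightarrow> a \<otimes>\<^bsub>G\<^esub> b = b \<otimes>\<^bsub>G\<^esub> a) \<and>
     \<comment> \<open>(C)\<close>
     (\<forall>a\<in>carrier G. \<forall>b\<in>carrier G.
        {a, b} \<in> cx_edges S \<longleftrightarrow> {inv\<^bsub>G\<^esub> a, inv\<^bsub>G\<^esub> b} \<in> cx_edges S) \<and>
     \<comment> \<open>(D)\<close>
     (\<forall>t\<in>ordered_edges S. \<forall>t'\<in>ordered_edges S.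
        t \<noteq> t' \<and> fst t \<otimes>\<^bsub>G\<^esub> inv\<^bsub>G\<^esub> (snd t) = fst t' \<otimes>\<^bsub>G\<^esub> inv\<^bsub>G\<^esub> (snd t')
        \<longrightarrow> snd t' = inv\<^bsub>G\<^esub> (fst t) \<and> fst t' = inv\<^bsub>G\<^esub> (snd t)) \<and>
     \<comment> \<open>(E) the 1-skeleton is connected\<close>
     (\<forall>u\<in>cx_vertices S. \<forall>v\<in>cx_vertices S.
        (u, v) \<in> (ordered_edges S)\<^sup>*)"

definition edgeE :: "('a, 'b) monoid_scheme \<Rightarrow> 'a \<Rightarrow> 'a set \<Rightarrow> 'a set" where
  "edgeE G g \<tau> = rtrans G \<tau> g"

definition C_edges :: "('a, 'b) monoid_scheme \<Rightarrow> 'a set set \<Rightarrow> 'a set set" where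
  "C_edges G S = {edgeE G g \<tau> | g \<tau>. g \<in> carrier G \<and> \<tau> \<in> cx_edges S}"

definition centers :: "('a, 'b) monoid_scheme \<Rightarrow> 'a set set \<Rightarrow> 'a set \<Rightarrow> 'a set" where
  "centers G S w = {c \<in> carrier G. \<exists>\<tau>\<in>cx_edges S. w = edgeE G c \<tau>}"

end

theory Submission
  imports Defs
begin

text \<open>Write \<open>w = {a g, b g}\<close> for an edge \<open>{a, b}\<close> of \<open>\<S>(1)\<close>. Besides \<open>g\<close>, the element
\<open>h = b a g\<close> is a center, via the edge \<open>{b\<inverse>, a\<inverse>}\<close> supplied by (C), since \<open>a b = b a\<close> by (B).
Conversely, if \<open>w = {p c, q c}\<close> then \<open>p q\<inverse> = a b\<inverse>\<close> (after ordering), and (D) leaves only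
\<open>(p, q) = (a, b)\<close>, giving \<open>c = g\<close>, or \<open>(p, q) = (b\<inverse>, a\<inverse>)\<close>, giving \<open>c = h\<close>.
Finally \<open>g \<noteq> h\<close>, because \<open>b a = 1\<close> would make \<open>{a, a\<inverse>}\<close> an edge, contrary to (0).\<close>

lemma cx_edgesE:
  assumes "\<tau> \<in> cx_edges S"
  obtains a b where "\<tau> = {a, b}"
  using assms unfolding cx_edges_def by (auto simp: card_2_iff)

lemma cx_edge_in_vertices: "{x, y} \<in> cx_edges S \<Longrightarrow> x \<in> cx_vertices S"
  unfolding cx_edges_def cx_vertices_def by auto

lemma ordered_edges_iff: "(a, b) \<in> ordered_edges S \<longleftrightarrow> {a, b} \<in> cx_edges S"
  unfolding ordered_edges_def by simp

lemma edgeE_doubleton: "edgeE G g {a, b} = {a \<otimes>\<^bsub>G\<^esub> g, b \<otimes>\<^bsub>G\<^esub> g}"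
  unfolding edgeE_def rtrans_def by simp

lemma center_edgeE:
  "c \<in> carrier G \<Longrightarrow> \<tau> \<in> cx_edges S \<Longrightarrow> c \<in> centers G S (edgeE G c \<tau>)"
  unfolding centers_def by auto

lemma (in group) m_inv_right_translate:
  assumes "x \<in> carrier G" "y \<in> carrier G" "z \<in> carrier G"
  shows "(x \<otimes> z) \<otimes> inv (y \<otimes> z) = x \<otimes> inv y"
proof -
  have "z \<otimes> (inv z \<otimes> inv y) = inv y"
    using assms by (simp flip: m_assoc)
  then show ?thesis
    using assms by (simp add: inv_mult_group m_assoc)
qed

locale comm_triplet = group G for G (structure) +
  fixes S :: "'a set set"
  assumes complex: "two_complex_in G S"
    and triplet: "comm_triplet_structure G S"
begin

lemma edge_in_carrier:
  assumes "{x, y} \<in> cx_edges S"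
  shows "x \<in> carrier G" "y \<in> carrier G"
proof -
  from assms obtain \<sigma> where "\<sigma> \<in> S" "{x, y} \<subseteq> \<sigma>"
    unfolding cx_edges_def by auto
  with complex show "x \<in> carrier G" "y \<in> carrier G"
    unfolding two_complex_in_def by auto
qed

lemma no_inverse_edge: "s \<in> cx_vertices S \<Longrightarrow> {s, inv s} \<notin> cx_edges S"
  using triplet unfolding comm_triplet_structure_def by blast

lemma edge_commute: "{a, b} \<in> cx_edges S \<Longrightarrow> a \<otimes> b = b \<otimes> a"
  using triplet unfolding comm_triplet_structure_def by blast

lemma inv_edge: "{a, b} \<in> cx_edges S \<Longrightarrow> {inv a, inv b} \<in> cx_edges S"
  using triplet edge_in_carrier unfolding comm_triplet_structure_def by blast

lemma equal_quotients:
  assumes "(a, b) \<in> ordered_edges S" "(p, q) \<in> ordered_edges S" "(a, b) \<noteq> (p, q)"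
    and "a \<otimes> inv b = p \<otimes> inv q"
  shows "p = inv b" "q = inv a"
proof -
  have "\<forall>t\<in>ordered_edges S. \<forall>t'\<in>ordered_edges S.
          t \<noteq> t' \<and> fst t \<otimes> inv (snd t) = fst t' \<otimes> inv (snd t')
          \<longrightarrow> snd t' = inv (fst t) \<and> fst t' = inv (snd t)"
    using triplet unfolding comm_triplet_structure_def by blast
  from this[rule_format, of "(a, b)" "(p, q)"] assms
  show "p = inv b" "q = inv a" by simp_all
qed

lemma matched_center_cases:
  assumes ab: "{a, b} \<in> cx_edges S" and pq: "{p, q} \<in> cx_edges S"
    and g: "g \<in> carrier G" and c: "c \<in> carrier G"
    and pc: "p \<otimes> c = a \<otimes> g" and qc: "q \<otimes> c = b \<otimes> g"
  shows "c = g \<or> c = b \<otimes> a \<otimes> g"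
proof (cases "(a, b) = (p, q)")
  case True
  with pc c g edge_in_carrier[OF ab] show ?thesis by simp
next
  case False
  note carr = edge_in_carrier[OF ab] edge_in_carrier[OF pq]
  have "a \<otimes> inv b = (a \<otimes> g) \<otimes> inv (b \<otimes> g)"
    using carr g by (simp add: m_inv_right_translate)
  also have "\<dots> = p \<otimes> inv q"
    using carr c by (simp add: m_inv_right_translate flip: pc qc)
  finally have "p = inv b"
    using equal_quotients ab pq False by (simp add: ordered_edges_iff)
  with pc have "c = b \<otimes> (a \<otimes> g)"
    using carr g c by (simp add: inv_solve_left')
  then show ?thesis
    using carr g by (simp add: m_assoc)
qed

lemma edgeE_dual_center:
  assumes ab: "{a, b} \<in> cx_edges S" and g: "g \<in> carrier G"
  shows "edgeE G g {a, b} = edgeE G (b \<otimes> a \<otimes> g) {inv b, inv a}"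
proof -
  note carr = edge_in_carrier[OF ab]
  have "inv b \<otimes> (b \<otimes> a \<otimes> g) = a \<otimes> g" "inv a \<otimes> (a \<otimes> b \<otimes> g) = b \<otimes> g"
    using carr g by (simp_all add: inv_solve_left' m_assoc)
  then show ?thesis
    using edge_commute[OF ab] by (auto simp: edgeE_doubleton)
qed

lemma centers_edgeE:
  assumes ab: "{a, b} \<in> cx_edges S" and g: "g \<in> carrier G"
  shows "centers G S (edgeE G g {a, b}) = {g, b \<otimes> a \<otimes> g}"
proof (rule equalityI)
  show "centers G S (edgeE G g {a, b}) \<subseteq> {g, b \<otimes> a \<otimes> g}"
  proof
    fix c assume "c \<in> centers G S (edgeE G g {a, b})"
    then obtain \<tau> where c: "c \<in> carrier G" and \<tau>: "\<tau> \<in> cx_edges S"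
      and w: "edgeE G g {a, b} = edgeE G c \<tau>"
      unfolding centers_def by auto
    obtain p q where pq: "\<tau> = {p, q}" using \<tau> by (rule cx_edgesE)
    have "{a \<otimes> g, b \<otimes> g} = {p \<otimes> c, q \<otimes> c}"
      using w pq by (simp add: edgeE_doubleton)
    then consider "p \<otimes> c = a \<otimes> g" "q \<otimes> c = b \<otimes> g" | "q \<otimes> c = a \<otimes> g" "p \<otimes> c = b \<otimes> g"
      by (auto simp: doubleton_eq_iff)
    then show "c \<in> {g, b \<otimes> a \<otimes> g}"
      using matched_center_cases[OF ab, of p q g c] matched_center_cases[OF ab, of q p g c]
        \<tau> pq g c by cases (auto simp: insert_commute)
  qed
  have "g \<in> centers G S (edgeE G g {a, b})"
    using g ab by (rule center_edgeE)
  moreover have "b \<otimes> a \<otimes> g \<in> centers G S (edgeE G g {a, b})"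
    unfolding edgeE_dual_center[OF ab g]
    using inv_edge[OF ab] edge_in_carrier[OF ab] g
    by (intro center_edgeE) (simp_all add: insert_commute)
  ultimately show "{g, b \<otimes> a \<otimes> g} \<subseteq> centers G S (edgeE G g {a, b})" by simp
qed

lemma center_ne_dual_center:
  assumes ab: "{a, b} \<in> cx_edges S" and g: "g \<in> carrier G"
  shows "g \<noteq> b \<otimes> a \<otimes> g"
proof
  note carr = edge_in_carrier[OF ab]
  assume "g = b \<otimes> a \<otimes> g"
  then have "b \<otimes> a = \<one>"
    using r_cancel_one'[of g "b \<otimes> a"] carr g by blast
  then have "b = inv a"
    using carr by (simp add: inv_equality)
  with ab have "{a, inv a} \<in> cx_edges S" by simp
  with no_inverse_edge[OF cx_edge_in_vertices[OF ab]] show False by contradiction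
qed

end

theorem mainTheorem6:
  fixes G :: "('a, 'b) monoid_scheme" and S :: "'a set set"
  assumes "group G"
    and "two_complex_in G S"
    and "comm_triplet_structure G S"
    and "w \<in> C_edges G S"
  shows "card (centers G S w) = 2"
proof -
  interpret comm_triplet G S
    using assms(1-3) by (simp add: comm_triplet_def comm_triplet_axioms_def)
  obtain g \<tau> where g: "g \<in> carrier G" and \<tau>: "\<tau> \<in> cx_edges S" and w: "w = edgeE G g \<tau>"
    using assms(4) unfolding C_edges_def by auto
  obtain a b where ab: "\<tau> = {a, b}" using \<tau> by (rule cx_edgesE)
  have "centers G S w = {g, b \<otimes>\<^bsub>G\<^esub> a \<otimes>\<^bsub>G\<^esub> g}"
    using centers_edgeE \<tau> g w ab by simp
  then show ?thesis
    using center_ne_dual_center \<tau> g ab by simp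
qed

end
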